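(* Let $\overline{F}$ be a finite set, $r=(r(i,j):i,j\in\overline{F})$ an irreducible stochastic matrix, and $\boldsymbol{\alpha}=(\alpha_j:j\in\overline{F})\in[0,1]^{\overline{F}}$ a non-zero vector, and let $r^{(\boldsymbol{\alpha})}=(I-rI_{(1-\boldsymbol{\alpha})})^{-1}rI_{\boldsymbol{\alpha}}$. If a row vector $y$ satisfies $y\cdot r^{(\boldsymbol{\alpha})}=y$, then $x=y\,(I-rI_{(1-\boldsymbol{\alpha})})^{-1}$ satisfies $x\cdot r=x$, and $y=(\alpha_j x_j:j\in\overline{F})$.
   Context: $I_{\boldsymbol{\alpha}}$ and $I_{(1-\boldsymbol{\alpha})}$ are the diagonal matrices indexed by $\overline{F}$ with diagonal entries $\alpha_j$, resp. $1-\alpha_j$; $I$ is the identity matrix. Under the given assumptions $I-rI_{(1-\boldsymbol{\alpha})}$ is invertible, and $r^{(\boldsymbol{\alpha})}$ is the transition matrix of the Markov chain obtained from the chain with transition matrix $r$ by randomized skipping with acceptance probabilities $\boldsymbol{\alpha}$ (a proposed next state $j$, chosen with probability $r(i,j)$ from the current state $i$, is accepted with probability $\alpha_j$; if rejected, a new proposal is drawn from row $j$ of $r$ without time passing, and so on until acceptance). *)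

theory Defs
  imports "HOL-Analysis.Analysis"
begin

definition stochastic_matrix :: "real^'n^'n \<Rightarrow> bool" where
  "stochastic_matrix r \<longleftrightarrow>
     (\<forall>i j. r $ i $ j \<ge> 0) \<and> (\<forall>i. (\<Sum>j\<in>UNIV. r $ i $ j) = 1)"

text \<open>Irreducible: every state j is reachable from every state i,
  i.e. for all i, j there is n with (r^n)(i,j) > 0 (paths of positive entries).\<close>
definition irreducible_matrix :: "real^'n^'n \<Rightarrow> bool" where
  "irreducible_matrix r \<longleftrightarrow> (\<forall>i j. (i, j) \<in> {(a, b). r $ a $ b > 0}\<^sup>*)"

definition diag_mat :: "real^'n \<Rightarrow> real^'n^'n" where
  "diag_mat v = (\<chi> i j. if i = j then v $ i else 0)"

end

theory Submission
  imports Defs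
begin

text \<open>The matrix \<open>I - r I\<^sub>1\<^sub>-\<^sub>\<alpha>\<close> is invertible by a maximum principle: if
  \<open>v = r I\<^sub>1\<^sub>-\<^sub>\<alpha> v\<close>, a coordinate of maximal modulus \<open>m\<close> can only be an average of
  coordinates of modulus \<open>m\<close> with weight \<open>1\<close>, so by irreducibility \<open>|v|\<close> is constant \<open>m\<close>, and at a
  state \<open>k\<close> with \<open>\<alpha>\<^sub>k > 0\<close> (which has a predecessor) this forces \<open>m = 0\<close>. Once the inverse
  exists, \<open>x = y (I - r I\<^sub>1\<^sub>-\<^sub>\<alpha>)\<^sup>-\<^sup>1\<close> gives both \<open>y = x - x r I\<^sub>1\<^sub>-\<^sub>\<alpha>\<close> and \<open>y = x r I\<^sub>\<alpha>\<close>;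
  adding \<open>x r I\<^sub>1\<^sub>-\<^sub>\<alpha>\<close> to both yields \<open>x r = x\<close>, and then \<open>y = x I\<^sub>\<alpha>\<close>.\<close>

lemma matrix_mult_diag_mat_nth: "(A ** diag_mat w) $ i $ j = A $ i $ j * w $ j"
proof -
  have "(A ** diag_mat w) $ i $ j = (\<Sum>k\<in>UNIV. if k = j then A $ i $ k * w $ k else 0)"
    by (simp add: matrix_matrix_mult_def diag_mat_def if_distrib cong: if_cong)
  then show ?thesis by simp
qed

lemma vector_matrix_mult_diag_mat: "x v* diag_mat w = (\<chi> j. w $ j * x $ j)"
proof -
  have "(x v* diag_mat w) $ j = (\<Sum>k\<in>UNIV. if k = j then x $ k * w $ k else 0)" for j
    by (simp add: vector_matrix_mult_def diag_mat_def if_distrib cong: if_cong)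
  then show ?thesis by (simp add: vec_eq_iff)
qed

lemma diag_mat_add: "diag_mat v + diag_mat w = diag_mat (v + w)"
  by (simp add: diag_mat_def vec_eq_iff)

lemma diag_mat_one: "diag_mat 1 = mat 1"
  by (simp add: diag_mat_def mat_def vec_eq_iff)

lemma matrix_inv_left:
  fixes A :: "'a::field^'n^'n"
  assumes "invertible A"
  shows "matrix_inv A ** A = mat 1"
  using someI_ex[OF assms[unfolded invertible_def]] unfolding matrix_inv_def by blast

lemma stochastic_matrix_row_positive:
  assumes "stochastic_matrix r"
  shows "\<exists>j. 0 < r $ i $ j"
proof (rule ccontr)
  assume "\<nexists>j. 0 < r $ i $ j"
  with assms have "r $ i $ j = 0" for j
    unfolding stochastic_matrix_def by (meson antisym not_less)
  moreover have "(\<Sum>j\<in>UNIV. r $ i $ j) = 1"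
    using assms unfolding stochastic_matrix_def by blast
  ultimately show False by simp
qed

lemma irreducible_matrix_column_positive:
  assumes "stochastic_matrix r" and "irreducible_matrix r"
  shows "\<exists>i. 0 < r $ i $ k"
proof -
  obtain j where j: "0 < r $ k $ j"
    using stochastic_matrix_row_positive[OF assms(1)] by blast
  have "(j, k) \<in> {(a, b). r $ a $ b > 0}\<^sup>*"
    using assms(2) unfolding irreducible_matrix_def by blast
  then show ?thesis
    by (cases rule: rtranclE) (use j in auto)
qed

lemma fixed_point_max_modulus_step:
  fixes r :: "real^'n^'n" and w v :: "real^'n"
  assumes st: "stochastic_matrix r" and w: "\<forall>j. 0 \<le> w $ j \<and> w $ j \<le> 1"
    and fix_v: "\<And>i. v $ i = (\<Sum>j\<in>UNIV. r $ i $ j * w $ j * v $ j)"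
    and m: "\<And>j. \<bar>v $ j\<bar> \<le> m"
    and max_i: "\<bar>v $ i\<bar> = m" and pos: "0 < r $ i $ j"
  shows "\<bar>v $ j\<bar> = m \<and> w $ j * m = m"
proof -
  have r_nonneg: "\<And>k. 0 \<le> r $ i $ k" and r_sum: "(\<Sum>k\<in>UNIV. r $ i $ k) = 1"
    using st unfolding stochastic_matrix_def by auto
  define gap where "gap k = r $ i $ k * (m - w $ k * \<bar>v $ k\<bar>)" for k
  have gap_nonneg: "0 \<le> gap k" for k
  proof -
    have "w $ k * \<bar>v $ k\<bar> \<le> 1 * m"
      using w m[of k] by (intro mult_mono) auto
    then show ?thesis unfolding gap_def using r_nonneg[of k] by simp
  qed
  have "m = \<bar>\<Sum>k\<in>UNIV. r $ i $ k * w $ k * v $ k\<bar>"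
    using max_i fix_v[of i] by argo
  also have "\<dots> \<le> (\<Sum>k\<in>UNIV. \<bar>r $ i $ k * w $ k * v $ k\<bar>)"
    by (rule sum_abs)
  also have "\<dots> = (\<Sum>k\<in>UNIV. r $ i $ k * (w $ k * \<bar>v $ k\<bar>))"
    using r_nonneg w by (intro sum.cong) (auto simp: abs_mult)
  finally have le: "m \<le> (\<Sum>k\<in>UNIV. r $ i $ k * (w $ k * \<bar>v $ k\<bar>))" .
  have "sum gap UNIV = m * (\<Sum>k\<in>UNIV. r $ i $ k) - (\<Sum>k\<in>UNIV. r $ i $ k * (w $ k * \<bar>v $ k\<bar>))"
    unfolding gap_def by (simp add: right_diff_distrib sum_subtractf sum_distrib_left mult.commute)
  then have "sum gap UNIV \<le> 0"
    using le r_sum by simp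
  then have "sum gap UNIV = 0"
    using gap_nonneg by (simp add: order_antisym sum_nonneg)
  then have "gap j = 0"
    using gap_nonneg sum_nonneg_eq_0_iff[of UNIV gap] by auto
  then have wv_j: "w $ j * \<bar>v $ j\<bar> = m"
    using pos unfolding gap_def by simp
  moreover have "w $ j * \<bar>v $ j\<bar> \<le> \<bar>v $ j\<bar>"
    using w by (simp add: mult_left_le_one_le)
  ultimately have "\<bar>v $ j\<bar> = m"
    using m[of j] by linarith
  with wv_j show ?thesis by simp
qed

lemma fixed_point_trivial:
  fixes r :: "real^'n^'n" and w v :: "real^'n"
  assumes st: "stochastic_matrix r" and irr: "irreducible_matrix r"
    and w: "\<forall>j. 0 \<le> w $ j \<and> w $ j \<le> 1" and w_ne_1: "w \<noteq> 1"
    and fix_v: "\<And>i. v $ i = (\<Sum>j\<in>UNIV. r $ i $ j * w $ j * v $ j)"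
  shows "v = 0"
proof -
  define m where "m = Max (range (\<lambda>j. \<bar>v $ j\<bar>))"
  have m: "\<bar>v $ j\<bar> \<le> m" for j
    unfolding m_def by (rule Max_ge) auto
  have "m \<in> range (\<lambda>j. \<bar>v $ j\<bar>)"
    unfolding m_def by (rule Max_in) auto
  then obtain i0 where i0: "\<bar>v $ i0\<bar> = m"
    by auto
  note step = fixed_point_max_modulus_step[OF st w fix_v m]
  have const: "\<bar>v $ j\<bar> = m" for j
  proof -
    have "(i0, j) \<in> {(a, b). r $ a $ b > 0}\<^sup>*"
      using irr unfolding irreducible_matrix_def by blast
    then show ?thesis
      by (induction rule: rtrancl_induct) (use i0 step in auto)
  qed
  obtain k where k: "w $ k \<noteq> 1"
    using w_ne_1 by (metis vec_eq_iff one_index)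
  obtain i where "0 < r $ i $ k"
    using irreducible_matrix_column_positive[OF st irr] by blast
  then have "w $ k * m = m"
    using step const by blast
  with k have "m = 0" by simp
  with const show "v = 0" by (simp add: vec_eq_iff)
qed

lemma invertible_id_minus_stochastic_diag:
  fixes r :: "real^'n^'n" and w :: "real^'n"
  assumes "stochastic_matrix r" and "irreducible_matrix r"
    and "\<forall>j. 0 \<le> w $ j \<and> w $ j \<le> 1" and "w \<noteq> 1"
  shows "invertible (mat 1 - r ** diag_mat w)"
proof -
  have "v = 0" if "(mat 1 - r ** diag_mat w) *v v = 0" for v
  proof (rule fixed_point_trivial[OF assms])
    fix i
    have "v $ i = ((r ** diag_mat w) *v v) $ i"
      using that by (simp add: matrix_vector_mult_diff_rdistrib)
    then show "v $ i = (\<Sum>j\<in>UNIV. r $ i $ j * w $ j * v $ j)"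
      by (simp add: matrix_vector_mult_def matrix_mult_diag_mat_nth)
  qed
  then show ?thesis
    unfolding invertible_left_inverse matrix_left_invertible_ker by blast
qed

theorem proposition2p5:
  fixes r :: "real^'n^'n" and \<alpha> y :: "real^'n"
  assumes "stochastic_matrix r" and "irreducible_matrix r"
    and "\<forall>j. 0 \<le> \<alpha> $ j \<and> \<alpha> $ j \<le> 1" and "\<alpha> \<noteq> 0"
    and "y v* (matrix_inv (mat 1 - r ** diag_mat (1 - \<alpha>)) ** r ** diag_mat \<alpha>) = y"
  shows "(let x = y v* matrix_inv (mat 1 - r ** diag_mat (1 - \<alpha>))
          in x v* r = x \<and> y = (\<chi> j. \<alpha> $ j * x $ j))"
proof -
  define A where "A = mat 1 - r ** diag_mat (1 - \<alpha>)"
  define x where "x = y v* matrix_inv A"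
  have "invertible A"
    unfolding A_def using assms(1-4)
    by (intro invertible_id_minus_stochastic_diag) auto
  then have y_eq_xA: "y = x v* A"
    unfolding x_def vector_matrix_mul_assoc by (simp add: matrix_inv_left)
  have y_eq_xr\<alpha>: "y = x v* r v* diag_mat \<alpha>"
    using assms(5) unfolding A_def[symmetric] x_def
    by (metis matrix_mul_assoc vector_matrix_mul_assoc)
  have "x v* r v* (diag_mat \<alpha> + diag_mat (1 - \<alpha>)) = x"
    using y_eq_xA y_eq_xr\<alpha> unfolding A_def
    by (simp add: vector_matrix_mult_diff_rdistrib vector_matrix_mult_add_rdistrib
        vector_matrix_mul_assoc)
  then have xr: "x v* r = x"
    by (simp add: diag_mat_add diag_mat_one)
  then show ?thesis
    using y_eq_xr\<alpha> unfolding x_def A_def Let_def by (simp add: vector_matrix_mult_diag_mat)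
qed

end
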